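(* Consider two instances of the baseline diffusion model that differ only in the new product. In the first, $v_{Hi}=v_H$ for all $i$ and the similarity is $s_p$; in the second, $v'_{Hi}=v'_H$ for all $i$ and the similarity is $s'_p$. Assume $(v'_H-v_H)(s'_p-s_p)<0$ and $\underline H_2<\underline H'_2$, where $\underline H_2$ and $\underline H'_2$ are defined in the context. Let $D_n^t$ and $D_n'^t$ be the corresponding sets of new-product consumers. Then: 1. If $s_p>s'_p$, then $D_n'^t\subseteq D_n^t$ for all $t\ge2$. 2. If $s_p<s'_p$, then one of the following holds: (a) $D_n'^t\subseteq D_n^t$ for all $t\ge2$; (b) there exists $\tilde t\ge2$ such that $D_n'^t\subseteq D_n^t$ for all $2\le t\le\tilde t$, and $D_n^t\subseteq D_n'^t$ for all $t>\tilde t$.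
   Context: Baseline diffusion model. There are $N\ge 2$ individuals partitioned into $G\ge 2$ nonempty groups $N_1,\dots,N_G$ (also denoting cardinalities). Members of $N_k$ have aspiration level $H_{N_k}$, with $H_{N_1}>\cdots>H_{N_G}$; write $H_i$ for individual $i$'s level. The incumbent product $p_c$ gives every individual the payoff $v_L$, where $H_{N_2}<v_L<H_{N_1}$. The new product $p_n$ gives individual $i$ the payoff $v_{Hi}\ge H_{N_1}$. Product similarities are $s_{p_c,p_c}=s_{p_n,p_n}=1$, $s_{p_n,p_c}=s_p\in(0,1)$ and $s_{p_c,p_n}=0$. Individual similarities are $s_{i,i}=1$ and $s_{i,j}=s\in(0,1]$ for $i\neq j$. Dynamics. In period $0$ everyone consumes $p_c$ ($D_c^0=\{1,\dots,N\}$, $D_n^0=\emptyset$). For $t\ge1$, $U_i^t(p_c)=\sum_{t'=0}^{t-1}\sum_{j\in D_c^{t'}}s_{i,j}(v_L-H_i)$ and $U_i^t(p_n)=s_pU_i^t(p_c)+\sum_{t'=0}^{t-1}\sum_{j\in D_n^{t'}}s_{i,j}(v_{Hj}-H_i)$. Individual $i\in D_n^t$ iff $U_i^t(p_n)>U_i^t(p_c)$; otherwise $i\in D_c^t$. Period-2 thresholds. Let $\lambda_1=\frac{s(2N-N_1-2)+2}{sN_1}$ (this is the same in both instances). Define $\mathscr F(H)=\frac{v_H-H}{(1-s_p)(v_L-H)}$ for $H<v_L$; it is strictly increasing, with range $(\frac{1}{1-s_p},\infty)$. Let $\underline H_2$ be the unique $H<v_L$ with $\mathscr F(H)=\lambda_1$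 if $\lambda_1>\frac1{1-s_p}$, and $\underline H_2=-\infty$ otherwise. Define $\underline H'_2$ analogously with $v'_H,s'_p$ in place of $v_H,s_p$. (With these definitions, $D_n^2=\{i:H_i>\underline H_2\}$ and $D_n'^2=\{i:H_i>\underline H'_2\}$.) *)

theory Defs
  imports Complex_Main "HOL-Library.Extended_Real"
begin

text \<open>Baseline diffusion model. Individuals form a finite set I. A history is the list
  [D_n^0, ..., D_n^(t-1)] of sets of new-product consumers; D_c^(t') = I - D_n^(t').\<close>

definition simI :: "real \<Rightarrow> 'a \<Rightarrow> 'a \<Rightarrow> real" where
  "simI s i j = (if i = j then 1 else s)"

definition Uold :: "'a set \<Rightarrow> real \<Rightarrow> ('a \<Rightarrow> real) \<Rightarrow> real \<Rightarrow> 'a set list \<Rightarrow> 'a \<Rightarrow> real" where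
  "Uold I s H vL hs i = (\<Sum>t'<length hs. \<Sum>j\<in>I - hs ! t'. simI s i j * (vL - H i))"

definition Unew :: "'a set \<Rightarrow> real \<Rightarrow> real \<Rightarrow> ('a \<Rightarrow> real) \<Rightarrow> real \<Rightarrow> ('a \<Rightarrow> real)
    \<Rightarrow> 'a set list \<Rightarrow> 'a \<Rightarrow> real" where
  "Unew I s sp H vL vH hs i = sp * Uold I s H vL hs i
     + (\<Sum>t'<length hs. \<Sum>j\<in>hs ! t'. simI s i j * (vH j - H i))"

primrec hist :: "'a set \<Rightarrow> real \<Rightarrow> real \<Rightarrow> ('a \<Rightarrow> real) \<Rightarrow> real \<Rightarrow> ('a \<Rightarrow> real)
    \<Rightarrow> nat \<Rightarrow> 'a set list" where
  "hist I s sp H vL vH 0 = [{}]"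
| "hist I s sp H vL vH (Suc t) = hist I s sp H vL vH t @
     [{i \<in> I. Unew I s sp H vL vH (hist I s sp H vL vH t) i > Uold I s H vL (hist I s sp H vL vH t) i}]"

definition Dn :: "'a set \<Rightarrow> real \<Rightarrow> real \<Rightarrow> ('a \<Rightarrow> real) \<Rightarrow> real \<Rightarrow> ('a \<Rightarrow> real)
    \<Rightarrow> nat \<Rightarrow> 'a set" where
  "Dn I s sp H vL vH t = hist I s sp H vL vH t ! t"

definition lambda1 :: "real \<Rightarrow> nat \<Rightarrow> nat \<Rightarrow> real" where
  "lambda1 s N N1 = (s * (2 * real N - real N1 - 2) + 2) / (s * real N1)"

definition FF :: "real \<Rightarrow> real \<Rightarrow> real \<Rightarrow> real \<Rightarrow> real" where
  "FF vH vL sp h = (vH - h) / ((1 - sp) * (vL - h))"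

definition lowH2 :: "real \<Rightarrow> real \<Rightarrow> real \<Rightarrow> real \<Rightarrow> ereal" where
  "lowH2 lam vH vL sp =
     (if lam > 1 / (1 - sp) then ereal (THE h. h < vL \<and> FF vH vL sp h = lam) else -\<infinity>)"

end

theory Submission
  imports Defs
begin

text \<open>With a common payoff vH, an individual above vL adopts from period 1 on, and one below vL
  adopts in period t + 1 iff (t + 1) W < (F(H i) + 1) E(i, t + 1), where W is the total similarity
  weight of the population and E(i, n) the accumulated weight of the adopters of the periods
  before n. Hence adopter sets grow in time, are upper sets in H, and D 2 = {H > lowH2}, so the
  threshold assumption gives the inclusion D' t \<subseteq> D t for t \<le> 2, and F' < F at lowH2.
  If sp' < sp, then F' < F persists at all lower levels, i.e. at everybody outside D 2, and the
  inclusion follows by induction on t. If sp < sp', hence vH' < vH, the ratio (F' + 1) / (F + 1)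
  is antitone below vL. If the inclusion first fails at T0, witnessed by i0, then every later
  adopter j of the first instance outside D' T0 lies below i0 and shares its exposures up to T0,
  and the ratio comparison transfers the advantage of the second instance from i0 to j.\<close>

definition weighted_card :: "real \<Rightarrow> 'a \<Rightarrow> 'a set \<Rightarrow> real" where
  "weighted_card s i A = (\<Sum>j\<in>A. simI s i j)"

lemma weighted_card_notin: "finite A \<Longrightarrow> i \<notin> A \<Longrightarrow> weighted_card s i A = s * real (card A)"
  unfolding weighted_card_def simI_def by (subst sum.cong[where B=A and h="\<lambda>_. s"]) auto

lemma weighted_card_in:
  assumes "finite A" "i \<in> A"
  shows "weighted_card s i A = 1 + s * (real (card A) - 1)"
proof -
  have "weighted_card s i A = simI s i i + weighted_card s i (A - {i})"
    unfolding weighted_card_def using assms by (simp add: sum.remove)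
  moreover have "card A \<ge> 1" using assms card_0_eq by fastforce
  ultimately show ?thesis
    using assms by (simp add: weighted_card_notin simI_def of_nat_diff)
qed

lemma weighted_card_ge_1: "finite A \<Longrightarrow> i \<in> A \<Longrightarrow> 0 \<le> s \<Longrightarrow> 1 \<le> weighted_card s i A"
  unfolding weighted_card_def using member_le_sum[of i A "simI s i"] by (simp add: simI_def)

lemma weighted_card_nonneg: "0 \<le> s \<Longrightarrow> 0 \<le> weighted_card s i A"
  unfolding weighted_card_def simI_def by (intro sum_nonneg) auto

lemma weighted_card_mono: "finite B \<Longrightarrow> A \<subseteq> B \<Longrightarrow> 0 \<le> s \<Longrightarrow> weighted_card s i A \<le> weighted_card s i B"
  unfolding weighted_card_def simI_def by (intro sum_mono2) auto

lemma weighted_card_le_if_mem: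
  "finite A \<Longrightarrow> (i \<in> A \<Longrightarrow> j \<in> A) \<Longrightarrow> s \<le> 1 \<Longrightarrow> weighted_card s i A \<le> weighted_card s j A"
  by (cases "i \<in> A"; cases "j \<in> A") (auto simp: weighted_card_in weighted_card_notin algebra_simps)

lemma length_hist: "length (hist I s sp H vL vH t) = Suc t"
  by (induction t) auto

lemma nth_hist: "t' \<le> t \<Longrightarrow> hist I s sp H vL vH t ! t' = Dn I s sp H vL vH t'"
proof (induction t)
  case 0 then show ?case by (simp add: Dn_def)
next
  case (Suc t)
  then show ?case
    by (cases "t' = Suc t") (auto simp: Dn_def nth_append length_hist)
qed

lemma Dn_0 [simp]: "Dn I s sp H vL vH 0 = {}"
  by (simp add: Dn_def)

lemma Dn_Suc: "Dn I s sp H vL vH (Suc t) = {i\<in>I. Unew I s sp H vL vH (hist I s sp H vL vH t) i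
      > Uold I s H vL (hist I s sp H vL vH t) i}"
  by (simp add: Dn_def nth_append length_hist)

lemma Dn_subset: "Dn I s sp H vL vH t \<subseteq> I"
  by (cases t) (auto simp: Dn_Suc)

lemma FF_eq: "h < vL \<Longrightarrow> sp < 1 \<Longrightarrow> FF vH vL sp h = (1 + (vH - vL) / (vL - h)) / (1 - sp)"
  unfolding FF_def by (simp add: field_simps)

lemma FF_gt: "h < vL \<Longrightarrow> sp < 1 \<Longrightarrow> vL < vH \<Longrightarrow> 1 / (1 - sp) < FF vH vL sp h"
  by (simp add: FF_eq divide_strict_right_mono)

lemma FF_pos: "h < vL \<Longrightarrow> sp < 1 \<Longrightarrow> vL < vH \<Longrightarrow> 0 < FF vH vL sp h"
  by (simp add: FF_def)

lemma strict_mono_on_FF: "sp < 1 \<Longrightarrow> vL < vH \<Longrightarrow> strict_mono_on {..<vL} (FF vH vL sp)"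
  by (rule strict_mono_onI) (auto simp: FF_eq intro!: divide_strict_right_mono divide_strict_left_mono)

lemma FF_less_FF_iff:
  assumes "h < vL" "sp < 1" "sp' < 1"
  shows "FF vH' vL sp' h < FF vH vL sp h \<longleftrightarrow> (vH' - h) * (1 - sp) < (vH - h) * (1 - sp')"
  using assms unfolding FF_def by (simp add: divide_simps)

lemma ex1_FF_eq:
  assumes "vL < vH" "sp < 1" "1 / (1 - sp) < lam"
  shows "\<exists>!h. h < vL \<and> FF vH vL sp h = lam"
proof (rule ex_ex1I)
  define m where "m = (1 - sp) * lam - 1"
  have m: "0 < m" using assms unfolding m_def by (simp add: field_simps)
  define h where "h = vL - (vH - vL) / m"
  show "\<exists>h. h < vL \<and> FF vH vL sp h = lam"
  proof (intro exI conjI)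
    show "h < vL" using m assms unfolding h_def by simp
    have "(vH - vL) / (vL - h) = m" using m assms unfolding h_def by simp
    then show "FF vH vL sp h = lam"
      using \<open>h < vL\<close> assms unfolding m_def by (simp add: FF_eq)
  qed
next
  show "h = h'" if "h < vL \<and> FF vH vL sp h = lam" "h' < vL \<and> FF vH vL sp h' = lam" for h h'
    using that strict_mono_on_eq[OF strict_mono_on_FF[OF assms(2,1)]] by auto
qed

lemma lowH2_eq_ereal_D:
  assumes "lowH2 lam vH vL sp = ereal h" "vL < vH" "sp < 1"
  shows "h < vL \<and> FF vH vL sp h = lam"
proof -
  have lam: "1 / (1 - sp) < lam" using assms(1) unfolding lowH2_def by (auto split: if_splits)
  then have "h = (THE h. h < vL \<and> FF vH vL sp h = lam)" using assms(1) unfolding lowH2_def by simp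
  then show ?thesis using theI'[OF ex1_FF_eq[OF assms(2,3) lam]] by simp
qed

lemma lowH2_less_ereal_iff:
  assumes "vL < vH" "sp < 1" "x < vL"
  shows "lowH2 lam vH vL sp < ereal x \<longleftrightarrow> lam < FF vH vL sp x"
proof (cases "1 / (1 - sp) < lam")
  case True
  then obtain h where h: "lowH2 lam vH vL sp = ereal h" unfolding lowH2_def by simp
  then have "h < vL" "FF vH vL sp h = lam" using lowH2_eq_ereal_D[OF h assms(1,2)] by auto
  then show ?thesis
    using h strict_mono_on_less[OF strict_mono_on_FF[OF assms(2,1)], of h x] assms(3) by auto
next
  case False
  then show ?thesis using FF_gt[OF assms(3,2,1)] unfolding lowH2_def by simp
qed

lemma lowH2_less_vL: "vL < vH \<Longrightarrow> sp < 1 \<Longrightarrow> lowH2 lam vH vL sp < ereal vL"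
  using lowH2_eq_ereal_D[of lam vH vL sp] unfolding lowH2_def by (cases "1 / (1 - sp) < lam") auto

lemma FF_less_FF_at_lowH2:
  assumes "lowH2 lam vH vL sp = ereal h" "lowH2 lam vH vL sp < lowH2 lam vH' vL sp'"
    and "vL < vH" "sp < 1" "vL < vH'" "sp' < 1"
  shows "FF vH' vL sp' h < FF vH vL sp h"
proof -
  obtain h' where h': "lowH2 lam vH' vL sp' = ereal h'"
    using assms(1,2) unfolding lowH2_def by (auto split: if_splits)
  have "h < vL" "FF vH vL sp h = lam" using lowH2_eq_ereal_D[OF assms(1,3,4)] by auto
  moreover have "h' < vL" "FF vH' vL sp' h' = lam" using lowH2_eq_ereal_D[OF h' assms(5,6)] by auto
  moreover have "h < h'" using assms(1,2) h' by simp
  ultimately show ?thesis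
    using strict_mono_on_less[OF strict_mono_on_FF[OF assms(6,5)], of h h'] by simp
qed

lemma FF_less_FF_of_le:
  assumes "FF vH' vL sp' h < FF vH vL sp h" "x \<le> h" "h < vL" "sp' \<le> sp" "sp < 1" "sp' < 1"
  shows "FF vH' vL sp' x < FF vH vL sp x"
proof -
  have "(vH' - h) * (1 - sp) < (vH - h) * (1 - sp')"
    using assms FF_less_FF_iff[of h vL sp sp' vH' vH] by simp
  moreover have "0 \<le> (h - x) * (sp - sp')" using assms by simp
  ultimately have "(vH' - x) * (1 - sp) < (vH - x) * (1 - sp')" by (simp add: algebra_simps)
  then show ?thesis using assms FF_less_FF_iff[of x vL sp sp' vH' vH] by simp
qed

lemma FF_plus_1_ratio_antitone:
  assumes gap: "FF vH' vL sp' h < FF vH vL sp h" "h < vL"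
    and "sp < sp'" "sp' < 1" "vH' < vH" "hj \<le> hi" "hi < vL"
  shows "(FF vH vL sp hj + 1) * (FF vH' vL sp' hi + 1) \<le> (FF vH' vL sp' hj + 1) * (FF vH vL sp hi + 1)"
proof -
  have "(vH' - h) * (1 - sp) < (vH - h) * (1 - sp')"
    using assms FF_less_FF_iff[of h vL sp sp' vH' vH] by simp
  moreover have "0 < (vL - h) * (sp' - sp)" using assms by simp
  ultimately have margin: "(vH' - vL) * (2 - sp) \<le> (vH - vL) * (2 - sp')"
    using \<open>vH' < vH\<close> by (simp add: algebra_simps)
  define aj where "aj = vL - hj"
  define ai where "ai = vL - hi"
  have pos: "0 < 1 - sp" "0 < 1 - sp'" "0 < ai" "ai \<le> aj"
    using assms unfolding ai_def aj_def by auto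
  have plus_1: "FF w vL p x + 1 = (w - x + (1 - p) * (vL - x)) / ((1 - p) * (vL - x))"
    if "x < vL" "p < 1" for w p x
  proof -
    have "(1 - p) * (vL - x) \<noteq> 0" using that by simp
    then show ?thesis unfolding FF_def by (simp add: divide_add_eq_iff)
  qed
  have "(vH' - hj + (1 - sp') * aj) * (vH - hi + (1 - sp) * ai)
      - (vH - hj + (1 - sp) * aj) * (vH' - hi + (1 - sp') * ai)
      = (aj - ai) * ((vH - vL) * (2 - sp') - (vH' - vL) * (2 - sp))"
    unfolding ai_def aj_def by (simp add: algebra_simps)
  also have "\<dots> \<ge> 0" using pos margin by simp
  finally have "(vH - hj + (1 - sp) * aj) * (vH' - hi + (1 - sp') * ai)
      \<le> (vH' - hj + (1 - sp') * aj) * (vH - hi + (1 - sp) * ai)" by simp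
  moreover have "hj < vL" "sp < 1" using assms by auto
  ultimately show ?thesis
    using pos \<open>hi < vL\<close> \<open>sp' < 1\<close>
    unfolding plus_1[OF \<open>hj < vL\<close> \<open>sp < 1\<close>] plus_1[OF \<open>hj < vL\<close> \<open>sp' < 1\<close>]
      plus_1[OF \<open>hi < vL\<close> \<open>sp < 1\<close>] plus_1[OF \<open>hi < vL\<close> \<open>sp' < 1\<close>]
      ai_def[symmetric] aj_def[symmetric]
    by (simp add: divide_simps)
qed

text \<open>Here a, a' and b, b' are the factors F + 1 of i0 and j in the two instances, P, P' their
  common exposures up to T0, and Q, Q' the later exposures of j.\<close>

lemma adoption_transfer:
  fixes a a' b b' P P' Q Q' X Y :: real
  assumes "0 < a" "0 < b" and "X < a' * P'" "a * P \<le> X"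
    and "0 \<le> P'" "P' \<le> P" "0 \<le> Q" "Q \<le> Q'"
    and ratio: "b * a' \<le> b' * a" and "Y < b * (P + Q)"
  shows "Y < b' * (P' + Q')"
proof -
  have aP: "a * P < a' * P'" using assms by linarith
  moreover have "a * P' \<le> a * P" using assms by simp
  ultimately have "a < a'" using \<open>0 \<le> P'\<close> by (metis mult_right_less_imp_less order.strict_trans1)
  then have "a * b < a' * b" using \<open>0 < b\<close> by simp
  then have "a * b < a * b'" using ratio by (simp add: algebra_simps)
  then have "b < b'" using \<open>0 < a\<close> by simp
  have "a * (b * P) < b * (a' * P')" using aP \<open>0 < b\<close> by (simp add: algebra_simps)
  also have "\<dots> \<le> a * (b' * P')"
    using mult_right_mono[OF ratio \<open>0 \<le> P'\<close>] by (simp add: algebra_simps)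
  finally have "b * P < b' * P'" using \<open>0 < a\<close> by simp
  moreover have "b * Q \<le> b' * Q'"
    using \<open>b < b'\<close> assms by (intro mult_mono) auto
  ultimately show ?thesis using assms by (simp add: algebra_simps)
qed

locale diffusion =
  fixes I :: "'a set" and s :: real and H :: "'a \<Rightarrow> real" and vL sp vH :: real
  assumes finite_I: "finite I" and s_pos: "0 < s" and s_le_1: "s \<le> 1"
    and sp_less_1: "sp < 1" and vL_less_vH: "vL < vH"
    and H_neq_vL: "i \<in> I \<Longrightarrow> H i \<noteq> vL" and H_le_vH: "i \<in> I \<Longrightarrow> H i \<le> vH"
begin

abbreviation D :: "nat \<Rightarrow> 'a set" where
  "D \<equiv> Dn I s sp H vL (\<lambda>_. vH)"

abbreviation F :: "real \<Rightarrow> real" where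
  "F \<equiv> FF vH vL sp"

definition exposure :: "'a \<Rightarrow> nat \<Rightarrow> real" where
  "exposure i n = (\<Sum>t<n. weighted_card s i (D t))"

lemma D_subset: "D t \<subseteq> I"
  by (rule Dn_subset)

lemma finite_D: "finite (D t)"
  using finite_subset[OF D_subset finite_I] .

lemma s_nonneg: "0 \<le> s"
  using s_pos by simp

lemma exposure_Suc: "exposure i (Suc n) = exposure i n + weighted_card s i (D n)"
  by (simp add: exposure_def)

lemma exposure_nonneg: "0 \<le> exposure i n"
  unfolding exposure_def by (intro sum_nonneg weighted_card_nonneg s_nonneg)

lemma exposure_split:
  "n \<le> m \<Longrightarrow> exposure i m = exposure i n + (\<Sum>t\<in>{n..<m}. weighted_card s i (D t))"
  unfolding exposure_def lessThan_atLeast0 by (simp add: sum.atLeastLessThan_concat)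

lemma exposure_less:
  assumes "i \<in> I"
  shows "exposure i (Suc t) < real (Suc t) * weighted_card s i I"
proof -
  have "exposure i (Suc t) = (\<Sum>t'<t. weighted_card s i (D (Suc t')))"
    unfolding exposure_def sum.lessThan_Suc_shift by (simp add: weighted_card_def)
  also have "\<dots> \<le> (\<Sum>t'<t. weighted_card s i I)"
    by (intro sum_mono weighted_card_mono[OF finite_I D_subset s_nonneg])
  also have "\<dots> < real (Suc t) * weighted_card s i I"
    using weighted_card_ge_1[OF finite_I assms s_nonneg] by (simp add: algebra_simps)
  finally show ?thesis .
qed

lemma Uold_hist:
  "Uold I s H vL (hist I s sp H vL (\<lambda>_. vH) t) i
     = (vL - H i) * (real (Suc t) * weighted_card s i I - exposure i (Suc t))"
proof -
  have "(\<Sum>j\<in>I - D t'. simI s i j * (vL - H i))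
      = (vL - H i) * (weighted_card s i I - weighted_card s i (D t'))" for t'
    unfolding weighted_card_def sum_diff[OF finite_I D_subset, symmetric]
    by (simp add: sum_distrib_right[symmetric] mult.commute)
  then have "Uold I s H vL (hist I s sp H vL (\<lambda>_. vH) t) i
      = (\<Sum>t'<Suc t. (vL - H i) * (weighted_card s i I - weighted_card s i (D t')))"
    unfolding Uold_def length_hist by (intro sum.cong) (auto simp: nth_hist)
  then show ?thesis
    by (simp add: exposure_def sum_distrib_left[symmetric] sum_subtractf)
qed

lemma Unew_minus_Uold:
  "Unew I s sp H vL (\<lambda>_. vH) (hist I s sp H vL (\<lambda>_. vH) t) i
       - Uold I s H vL (hist I s sp H vL (\<lambda>_. vH) t) i
     = (vH - H i) * exposure i (Suc t)
       - (1 - sp) * (vL - H i) * (real (Suc t) * weighted_card s i I - exposure i (Suc t))"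
proof -
  have "(\<Sum>t'<length (hist I s sp H vL (\<lambda>_. vH) t).
          \<Sum>j\<in>hist I s sp H vL (\<lambda>_. vH) t ! t'. simI s i j * (vH - H i))
      = (vH - H i) * exposure i (Suc t)"
    unfolding length_hist exposure_def sum_distrib_left weighted_card_def
    by (intro sum.cong) (auto simp: nth_hist sum_distrib_right[symmetric] mult.commute)
  then show ?thesis
    unfolding Unew_def Uold_hist by (simp add: algebra_simps)
qed

lemma mem_D_Suc_iff:
  "i \<in> D (Suc t) \<longleftrightarrow> i \<in> I \<and>
     0 < (vH - H i) * exposure i (Suc t)
       - (1 - sp) * (vL - H i) * (real (Suc t) * weighted_card s i I - exposure i (Suc t))"
  using Unew_minus_Uold[of t i] unfolding Dn_Suc by auto

lemma high_mem_D_Suc: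
  assumes "i \<in> I" "vL < H i"
  shows "i \<in> D (Suc t)"
proof -
  have "0 \<le> (vH - H i) * exposure i (Suc t)"
    using H_le_vH[OF assms(1)] exposure_nonneg by simp
  moreover have "0 < (1 - sp) * (H i - vL) * (real (Suc t) * weighted_card s i I - exposure i (Suc t))"
    using exposure_less[OF assms(1)] assms sp_less_1 by simp
  ultimately show ?thesis using assms(1) by (simp add: mem_D_Suc_iff algebra_simps)
qed

lemma low_mem_D_Suc_iff:
  assumes "i \<in> I" "H i < vL"
  shows "i \<in> D (Suc t) \<longleftrightarrow> real (Suc t) * weighted_card s i I < (F (H i) + 1) * exposure i (Suc t)"
proof -
  let ?c = "(1 - sp) * (vL - H i)"
  have "0 < ?c" using assms sp_less_1 by simp
  moreover have "vH - H i = ?c * F (H i)"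
    using assms sp_less_1 unfolding FF_def by simp
  then have "(vH - H i) * exposure i (Suc t)
       - ?c * (real (Suc t) * weighted_card s i I - exposure i (Suc t))
     = ?c * ((F (H i) + 1) * exposure i (Suc t) - real (Suc t) * weighted_card s i I)"
    by (simp only:) (simp add: algebra_simps)
  ultimately show ?thesis
    unfolding mem_D_Suc_iff using assms(1) zero_less_mult_iff[of ?c] \<open>0 < ?c\<close> by simp
qed

lemma D_subset_D_Suc: "D t \<subseteq> D (Suc t)"
proof (induction t rule: less_induct)
  case (less t)
  show ?case
  proof (cases t)
    case (Suc m)
    have earlier: "D k \<subseteq> D t" if "k \<le> t" for k
      using that less.IH by (induction rule: dec_induct) auto
    show ?thesis
    proof
      fix i assume i: "i \<in> D t"
      then have "i \<in> I" using D_subset by blast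
      show "i \<in> D (Suc t)"
      proof (cases "vL < H i")
        case True then show ?thesis using high_mem_D_Suc \<open>i \<in> I\<close> by blast
      next
        case False
        then have low: "H i < vL" using H_neq_vL[OF \<open>i \<in> I\<close>] by simp
        let ?c = "F (H i) + 1" and ?W = "weighted_card s i I" and ?w = "weighted_card s i (D t)"
        have "0 < ?c" using FF_pos[OF low sp_less_1 vL_less_vH] by simp
        have before: "real t * ?W < ?c * exposure i t"
          using i low_mem_D_Suc_iff[OF \<open>i \<in> I\<close> low] Suc by simp
        have "exposure i t \<le> real t * ?w"
          using sum_mono[of "{..<t}" "\<lambda>t'. weighted_card s i (D t')" "\<lambda>_. ?w"]
            weighted_card_mono[OF finite_D earlier s_nonneg]
          unfolding exposure_def by auto
        then have "?c * exposure i t \<le> real t * (?c * ?w)"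
          using \<open>0 < ?c\<close> by (simp add: mult.left_commute)
        with before have "real t * ?W < real t * (?c * ?w)" by simp
        then have "?W < ?c * ?w" using Suc by (simp add: mult_less_cancel_left)
        with before have "real (Suc t) * ?W < ?c * exposure i (Suc t)"
          by (simp add: exposure_Suc algebra_simps)
        then show ?thesis using low_mem_D_Suc_iff[OF \<open>i \<in> I\<close> low] by simp
      qed
    qed
  qed simp
qed

lemma mono_D: "mono D"
  by (rule mono_iff_le_Suc[THEN iffD2]) (use D_subset_D_Suc in blast)

lemma D_upward_closed:
  assumes "i \<in> D t" "j \<in> I" "H i \<le> H j"
  shows "j \<in> D t"
  using assms
proof (induction t arbitrary: i j rule: less_induct)
  case (less t)
  then obtain m where t: "t = Suc m" by (cases t) auto
  have "i \<in> I" using less.prems D_subset by blast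
  show ?case
  proof (cases "vL < H j")
    case True then show ?thesis using high_mem_D_Suc less.prems t by blast
  next
    case False
    then have low_j: "H j < vL" using H_neq_vL less.prems by force
    then have low_i: "H i < vL" using less.prems by simp
    have "exposure i t \<le> exposure j t"
      unfolding exposure_def
      by (intro sum_mono weighted_card_le_if_mem finite_D s_le_1) (use less in auto)
    have "F (H i) \<le> F (H j)"
      using strict_mono_on_less_eq[OF strict_mono_on_FF[OF sp_less_1 vL_less_vH]] low_i low_j less.prems
      by simp
    have "real t * weighted_card s j I = real t * weighted_card s i I"
      using \<open>i \<in> I\<close> less.prems by (simp add: weighted_card_in finite_I)
    also have "\<dots> < (F (H i) + 1) * exposure i t"
      using less.prems low_mem_D_Suc_iff[OF \<open>i \<in> I\<close> low_i] t by simp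
    also have "\<dots> \<le> (F (H j) + 1) * exposure j t"
      using FF_pos[OF low_i sp_less_1 vL_less_vH] exposure_nonneg[of i t]
        \<open>exposure i t \<le> exposure j t\<close> \<open>F (H i) \<le> F (H j)\<close>
      by (intro mult_mono) auto
    finally have "real t * weighted_card s j I < (F (H j) + 1) * exposure j t" .
    then show ?thesis using low_mem_D_Suc_iff[OF less.prems(2) low_j] t by simp
  qed
qed

lemma D_1: "D 1 = {i\<in>I. vL < H i}"
proof -
  have "i \<notin> D (Suc 0)" if "i \<in> I" "H i < vL" for i
    using low_mem_D_Suc_iff[OF that, of 0] weighted_card_nonneg[OF s_nonneg, of i I]
    by (simp add: exposure_def weighted_card_def)
  then show ?thesis
    using D_subset high_mem_D_Suc H_neq_vL by (fastforce simp: linorder_neq_iff)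
qed

lemma low_mem_D_2_iff:
  assumes "i \<in> I" "H i < vL" and high: "{i\<in>I. vL < H i} \<noteq> {}"
  shows "i \<in> D 2 \<longleftrightarrow> lambda1 s (card I) (card {i\<in>I. vL < H i}) < F (H i)"
proof -
  let ?N = "real (card I)" and ?N1 = "real (card {i\<in>I. vL < H i})"
  have "0 < ?N1" using high finite_I by (simp add: card_gt_0_iff)
  have "exposure i 2 = s * ?N1"
    using D_1 assms(2) finite_I weighted_card_notin[of "{i\<in>I. vL < H i}" i s]
    by (simp add: exposure_def numeral_2_eq_2 weighted_card_def)
  moreover have "weighted_card s i I = 1 + s * (?N - 1)"
    using assms(1) finite_I by (simp add: weighted_card_in)
  ultimately have "i \<in> D 2 \<longleftrightarrow> 2 * (1 + s * (?N - 1)) < (F (H i) + 1) * (s * ?N1)"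
    using low_mem_D_Suc_iff[OF assms(1,2), of 1] by (simp add: numeral_2_eq_2)
  also have "\<dots> \<longleftrightarrow> s * (2 * ?N - ?N1 - 2) + 2 < F (H i) * (s * ?N1)"
    by (simp add: algebra_simps)
  also have "\<dots> \<longleftrightarrow> lambda1 s (card I) (card {i\<in>I. vL < H i}) < F (H i)"
    unfolding lambda1_def using \<open>0 < ?N1\<close> s_pos by (simp add: pos_divide_less_eq)
  finally show ?thesis .
qed

lemma D_2:
  assumes "{i\<in>I. vL < H i} \<noteq> {}"
  shows "D 2 = {i\<in>I. lowH2 (lambda1 s (card I) (card {i\<in>I. vL < H i})) vH vL sp < ereal (H i)}"
    (is "_ = {i\<in>I. ?h2 < ereal (H i)}")
proof (intro set_eqI iffI)
  fix i assume "i \<in> D 2"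
  then have "i \<in> I" using D_subset by blast
  show "i \<in> {i\<in>I. ?h2 < ereal (H i)}"
  proof (cases "vL < H i")
    case True
    have "?h2 < ereal vL" by (rule lowH2_less_vL[OF vL_less_vH sp_less_1])
    also have "\<dots> < ereal (H i)" using True by simp
    finally show ?thesis using \<open>i \<in> I\<close> by simp
  next
    case False
    then have "H i < vL" using H_neq_vL[OF \<open>i \<in> I\<close>] by simp
    then show ?thesis
      using \<open>i \<in> D 2\<close> \<open>i \<in> I\<close> low_mem_D_2_iff[OF _ _ assms]
        lowH2_less_ereal_iff[OF vL_less_vH sp_less_1] by simp
  qed
next
  fix i assume i: "i \<in> {i\<in>I. ?h2 < ereal (H i)}"
  show "i \<in> D 2"
  proof (cases "vL < H i")
    case True
    then show ?thesis using high_mem_D_Suc[of i 1] i by (simp add: numeral_2_eq_2)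
  next
    case False
    then have "H i < vL" using H_neq_vL i by force
    then show ?thesis
      using i low_mem_D_2_iff[OF _ _ assms] lowH2_less_ereal_iff[OF vL_less_vH sp_less_1] by simp
  qed
qed

lemma exposure_eq_if_never_adopted:
  assumes "\<forall>t<n. i \<notin> D t \<and> j \<notin> D t"
  shows "exposure i n = exposure j n"
  unfolding exposure_def using assms by (intro sum.cong refl) (simp add: weighted_card_notin finite_D)

end

locale diffusion_pair = A: diffusion I s H vL sp vH + B: diffusion I s H vL sp' vH'
  for I :: "'a set" and s H vL sp vH sp' vH'
begin

lemma B_D_subset_A_D_if_preceded:
  assumes "\<forall>t<T. B.D t \<subseteq> A.D t" "i \<in> B.D T" "H i < vL" "B.F (H i) \<le> A.F (H i)"
  shows "i \<in> A.D T"
proof -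
  obtain m where T: "T = Suc m" using assms(2) by (cases T) auto
  have "i \<in> I" using assms(2) B.D_subset by blast
  have "B.exposure i T \<le> A.exposure i T"
    unfolding A.exposure_def B.exposure_def
    using assms(1) by (intro sum_mono weighted_card_mono[OF A.finite_D _ A.s_nonneg]) auto
  then have "real T * weighted_card s i I < (B.F (H i) + 1) * B.exposure i T"
    using assms(2) B.low_mem_D_Suc_iff[OF \<open>i \<in> I\<close> assms(3)] T by simp
  also have "\<dots> \<le> (A.F (H i) + 1) * A.exposure i T"
    using FF_pos[OF assms(3) B.sp_less_1 B.vL_less_vH] assms(4) B.exposure_nonneg
      \<open>B.exposure i T \<le> A.exposure i T\<close>
    by (intro mult_mono) auto
  finally show ?thesis using A.low_mem_D_Suc_iff[OF \<open>i \<in> I\<close> assms(3)] T by simp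
qed

context
  fixes T0 :: nat and i0 :: 'a and h :: real
  assumes sp_less: "sp < sp'" and vH_greater: "vH' < vH"
    and gap: "B.F h < A.F h" "h < vL"
    and subset_before: "\<forall>t<T0. B.D t \<subseteq> A.D t"
    and i0_B: "i0 \<in> B.D T0" and i0_A: "i0 \<notin> A.D T0"
begin

lemma i0_mem_I: "i0 \<in> I"
  using i0_B B.D_subset by blast

lemma T0_Suc: "T0 = Suc (T0 - 1)"
  using i0_B by (cases T0) auto

lemma i0_low: "H i0 < vL"
  using A.high_mem_D_Suc[OF i0_mem_I] i0_A T0_Suc A.H_neq_vL[OF i0_mem_I]
  by (metis linorder_neq_iff)

lemma i0_not_in_A_D: "t \<le> T0 \<Longrightarrow> i0 \<notin> A.D t"
  using monoD[OF A.mono_D] i0_A by blast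

lemma i0_not_in_B_D: "t < T0 \<Longrightarrow> i0 \<notin> B.D t"
  using subset_before i0_not_in_A_D by fastforce

lemma exposure_i0_before:
  "real T0 * weighted_card s i0 I < (B.F (H i0) + 1) * B.exposure i0 T0"
  "(A.F (H i0) + 1) * A.exposure i0 T0 \<le> real T0 * weighted_card s i0 I"
  "B.exposure i0 T0 \<le> A.exposure i0 T0"
proof -
  show "real T0 * weighted_card s i0 I < (B.F (H i0) + 1) * B.exposure i0 T0"
    using i0_B B.low_mem_D_Suc_iff[OF i0_mem_I i0_low] T0_Suc by (metis (no_types))
  show "(A.F (H i0) + 1) * A.exposure i0 T0 \<le> real T0 * weighted_card s i0 I"
    using i0_A A.low_mem_D_Suc_iff[OF i0_mem_I i0_low] T0_Suc by (metis (no_types) not_less)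
  show "B.exposure i0 T0 \<le> A.exposure i0 T0"
    unfolding A.exposure_def B.exposure_def using subset_before
    by (intro sum_mono weighted_card_mono[OF A.finite_D _ A.s_nonneg]) auto
qed

lemma exposure_eq_exposure_i0:
  assumes "j \<in> I" "H j < H i0" "j \<notin> B.D T0"
  shows "A.exposure j T0 = A.exposure i0 T0" "B.exposure j T0 = B.exposure i0 T0"
proof -
  have "j \<notin> A.D t" if "t < T0" for t
    using A.D_upward_closed[of j t i0] assms(2) i0_mem_I i0_not_in_A_D that by auto
  then show "A.exposure j T0 = A.exposure i0 T0"
    using i0_not_in_A_D by (intro A.exposure_eq_if_never_adopted) auto
  have "j \<notin> B.D t" if "t < T0" for t
    using monoD[OF B.mono_D, of t T0] assms(3) that by auto
  then show "B.exposure j T0 = B.exposure i0 T0"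
    using i0_not_in_B_D by (intro B.exposure_eq_if_never_adopted) auto
qed

lemma A_D_subset_B_D_after:
  "T0 \<le> T \<Longrightarrow> A.D T \<subseteq> B.D T"
proof (induction T rule: less_induct)
  case (less T)
  have T: "T = Suc (T - 1)" using less.prems T0_Suc by linarith
  show ?case
  proof
    fix j assume j: "j \<in> A.D T"
    then have "j \<in> I" using A.D_subset by blast
    show "j \<in> B.D T"
    proof (cases "vL < H j \<or> j \<in> B.D T0")
      case True
      then show ?thesis
        using B.high_mem_D_Suc[OF \<open>j \<in> I\<close>, of "T - 1"] monoD[OF B.mono_D less.prems] T by auto
    next
      case False
      then have low: "H j < vL" using A.H_neq_vL[OF \<open>j \<in> I\<close>] by force
      have "H j < H i0"
        using False B.D_upward_closed[OF i0_B \<open>j \<in> I\<close>] by force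
      let ?Q = "\<Sum>t\<in>{T0..<T}. weighted_card s j (A.D t)"
        and ?Q' = "\<Sum>t\<in>{T0..<T}. weighted_card s j (B.D t)"
      have "?Q \<le> ?Q'"
        using less.IH by (intro sum_mono weighted_card_mono[OF B.finite_D _ A.s_nonneg]) auto
      moreover have "0 \<le> ?Q" by (intro sum_nonneg weighted_card_nonneg A.s_nonneg)
      moreover have "real T * weighted_card s j I < (A.F (H j) + 1) * (A.exposure i0 T0 + ?Q)"
        using j A.low_mem_D_Suc_iff[OF \<open>j \<in> I\<close> low] T A.exposure_split[OF less.prems]
          exposure_eq_exposure_i0[OF \<open>j \<in> I\<close> \<open>H j < H i0\<close>] False
        by (metis (no_types))
      moreover have "(A.F (H j) + 1) * (B.F (H i0) + 1) \<le> (B.F (H j) + 1) * (A.F (H i0) + 1)"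
        using FF_plus_1_ratio_antitone[OF gap sp_less B.sp_less_1 vH_greater] \<open>H j < H i0\<close> i0_low
        by simp
      ultimately have "real T * weighted_card s j I < (B.F (H j) + 1) * (B.exposure i0 T0 + ?Q')"
        using FF_pos[OF i0_low A.sp_less_1 A.vL_less_vH] FF_pos[OF low A.sp_less_1 A.vL_less_vH]
        by (intro adoption_transfer[OF _ _ exposure_i0_before(1,2) B.exposure_nonneg
              exposure_i0_before(3)]) auto
      then show ?thesis
        using B.low_mem_D_Suc_iff[OF \<open>j \<in> I\<close> low] T B.exposure_split[OF less.prems]
          exposure_eq_exposure_i0[OF \<open>j \<in> I\<close> \<open>H j < H i0\<close>] False
        by (metis (no_types))
    qed
  qed
qed

end

context
  fixes lam :: real
  defines "lam \<equiv> lambda1 s (card I) (card {i\<in>I. vL < H i})"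
  assumes high_nonempty: "{i\<in>I. vL < H i} \<noteq> {}"
    and threshold_less: "lowH2 lam vH vL sp < lowH2 lam vH' vL sp'"
begin

lemma B_D_subset_A_D_upto_2: "t \<le> 2 \<Longrightarrow> B.D t \<subseteq> A.D t"
  using A.D_1 B.D_1 A.D_2[OF high_nonempty] B.D_2[OF high_nonempty] threshold_less
  by (auto simp: le_Suc_eq numeral_2_eq_2 lam_def)

lemma B_D_subset_A_D_if_sp_greater:
  assumes "sp' < sp"
  shows "B.D T \<subseteq> A.D T"
proof (induction T rule: less_induct)
  case (less T)
  show ?case
  proof (cases "T \<le> 2")
    case True then show ?thesis by (rule B_D_subset_A_D_upto_2)
  next
    case False
    show ?thesis
    proof
      fix i assume i: "i \<in> B.D T"
      then have "i \<in> I" using B.D_subset by blast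
      show "i \<in> A.D T"
      proof (cases "vL < H i \<or> i \<in> A.D 2")
        case True
        then show ?thesis
          using A.high_mem_D_Suc[OF \<open>i \<in> I\<close>, of "T - 1"] monoD[OF A.mono_D, of 2 T] False
          by (auto simp: Suc_diff_le)
      next
        case False
        then have low: "H i < vL" using A.H_neq_vL[OF \<open>i \<in> I\<close>] by force
        have "\<not> lowH2 lam vH vL sp < ereal (H i)"
          using False \<open>i \<in> I\<close> A.D_2[OF high_nonempty] by (simp add: lam_def)
        then obtain h2 where h2: "lowH2 lam vH vL sp = ereal h2" "H i \<le> h2"
          unfolding lowH2_def by (auto split: if_splits)
        have "h2 < vL" using lowH2_eq_ereal_D[OF h2(1) A.vL_less_vH A.sp_less_1] by simp
        have "B.F h2 < A.F h2"
          by (rule FF_less_FF_at_lowH2[OF h2(1) threshold_less A.vL_less_vH A.sp_less_1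
                B.vL_less_vH B.sp_less_1])
        then have "B.F (H i) < A.F (H i)"
          using FF_less_FF_of_le h2(2) \<open>h2 < vL\<close> assms A.sp_less_1 B.sp_less_1 by simp
        then show ?thesis
          using B_D_subset_A_D_if_preceded less.IH i low by auto
      qed
    qed
  qed
qed

lemma B_D_subset_A_D_or_reversal_if_sp_less:
  assumes "sp < sp'" "vH' < vH"
  shows "(\<forall>t. B.D t \<subseteq> A.D t)
    \<or> (\<exists>tt\<ge>2. (\<forall>t\<le>tt. B.D t \<subseteq> A.D t) \<and> (\<forall>t>tt. A.D t \<subseteq> B.D t))"
proof (cases "\<forall>t. B.D t \<subseteq> A.D t")
  case False
  define T0 where "T0 = (LEAST t. \<not> B.D t \<subseteq> A.D t)"
  have "\<exists>t. \<not> B.D t \<subseteq> A.D t" using False by simp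
  then have "\<not> B.D T0 \<subseteq> A.D T0" unfolding T0_def by (rule LeastI_ex)
  then obtain i0 where i0: "i0 \<in> B.D T0" "i0 \<notin> A.D T0" by blast
  have before: "\<forall>t<T0. B.D t \<subseteq> A.D t"
    using not_less_Least[of _ "\<lambda>t. \<not> B.D t \<subseteq> A.D t"] unfolding T0_def by blast
  have "2 < T0"
    using B_D_subset_A_D_upto_2[of T0] \<open>\<not> B.D T0 \<subseteq> A.D T0\<close> by linarith
  have "1 / (1 - sp) < 1 / (1 - sp')"
    using assms B.sp_less_1 by (simp add: frac_less2)
  moreover have "1 / (1 - sp') < lam"
    using threshold_less unfolding lowH2_def by (auto split: if_splits)
  ultimately obtain h2 where h2: "lowH2 lam vH vL sp = ereal h2"
    unfolding lowH2_def by simp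
  have "B.F h2 < A.F h2"
    by (rule FF_less_FF_at_lowH2[OF h2 threshold_less A.vL_less_vH A.sp_less_1
          B.vL_less_vH B.sp_less_1])
  moreover have "h2 < vL" using lowH2_eq_ereal_D[OF h2 A.vL_less_vH A.sp_less_1] by simp
  ultimately have after: "T0 \<le> t \<Longrightarrow> A.D t \<subseteq> B.D t" for t
    by (rule A_D_subset_B_D_after[OF assms _ _ before i0])
  have "\<exists>tt\<ge>2. (\<forall>t\<le>tt. B.D t \<subseteq> A.D t) \<and> (\<forall>t>tt. A.D t \<subseteq> B.D t)"
  proof (intro exI[of _ "T0 - 1"] conjI allI impI)
    show "2 \<le> T0 - 1" using \<open>2 < T0\<close> by simp
    show "B.D t \<subseteq> A.D t" if "t \<le> T0 - 1" for t
      using before that \<open>2 < T0\<close> by simp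
    show "A.D t \<subseteq> B.D t" if "T0 - 1 < t" for t
      using after that by simp
  qed
  then show ?thesis ..
qed simp

end

end

lemma aspiration_levels:
  fixes HN :: "nat \<Rightarrow> real"
  assumes "G \<ge> 2" "\<forall>i\<in>I. grp i \<in> {1..G}"
    and "\<forall>k\<in>{1..G}. \<forall>l\<in>{1..G}. k < l \<longrightarrow> HN k > HN l"
    and "\<forall>i\<in>I. H i = HN (grp i)" "HN 2 < vL" "vL < HN 1" "i \<in> I"
  shows "H i \<le> HN 1" "vL < H i \<longleftrightarrow> grp i = 1" "H i \<noteq> vL"
proof -
  have "grp i \<in> {1..G}" "2 \<in> {1..G}" using assms by auto
  then have "grp i = 1 \<or> HN (grp i) \<le> HN 2"
    using assms(3) by (cases "grp i \<le> 2") (auto simp: le_Suc_eq numeral_2_eq_2 less_imp_le)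
  then show "H i \<le> HN 1" "vL < H i \<longleftrightarrow> grp i = 1" "H i \<noteq> vL"
    using assms by auto
qed

theorem proposition3:
  fixes I :: "'a set" and grp :: "'a \<Rightarrow> nat" and G :: nat and HN :: "nat \<Rightarrow> real"
    and H :: "'a \<Rightarrow> real" and vL vH vH' sp sp' s :: real
  assumes finI: "finite I"
    and G2: "G \<ge> 2"
    and grp_range: "\<forall>i\<in>I. grp i \<in> {1..G}"
    and grp_nonempty: "\<forall>k\<in>{1..G}. \<exists>i\<in>I. grp i = k"
    and HN_decr: "\<forall>k\<in>{1..G}. \<forall>l\<in>{1..G}. k < l \<longrightarrow> HN k > HN l"
    and H_def: "\<forall>i\<in>I. H i = HN (grp i)"
    and vL_bounds: "HN 2 < vL" "vL < HN 1"
    and vH_ge: "vH \<ge> HN 1" and vH'_ge: "vH' \<ge> HN 1"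
    and sp: "0 < sp" "sp < 1" and sp': "0 < sp'" "sp' < 1"
    and s: "0 < s" "s \<le> 1"
    and opp: "(vH' - vH) * (sp' - sp) < 0"
    and thr: "lowH2 (lambda1 s (card I) (card {i\<in>I. grp i = 1})) vH vL sp
              < lowH2 (lambda1 s (card I) (card {i\<in>I. grp i = 1})) vH' vL sp'"
  shows "(sp > sp' \<longrightarrow>
            (\<forall>t\<ge>2. Dn I s sp' H vL (\<lambda>_. vH') t \<subseteq> Dn I s sp H vL (\<lambda>_. vH) t))
       \<and> (sp < sp' \<longrightarrow>
            (\<forall>t\<ge>2. Dn I s sp' H vL (\<lambda>_. vH') t \<subseteq> Dn I s sp H vL (\<lambda>_. vH) t)
          \<or> (\<exists>tt\<ge>2. (\<forall>t. 2 \<le> t \<and> t \<le> tt \<longrightarrow>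
                          Dn I s sp' H vL (\<lambda>_. vH') t \<subseteq> Dn I s sp H vL (\<lambda>_. vH) t)
                    \<and> (\<forall>t>tt. Dn I s sp H vL (\<lambda>_. vH) t \<subseteq> Dn I s sp' H vL (\<lambda>_. vH') t)))"
proof -
  note levels = aspiration_levels[OF G2 grp_range HN_decr H_def vL_bounds]
  interpret diffusion_pair I s H vL sp vH sp' vH'
    using finI s sp sp' vL_bounds vH_ge vH'_ge levels by unfold_locales force+
  have high: "{i\<in>I. grp i = 1} = {i\<in>I. vL < H i}"
    using levels by blast
  have "{i\<in>I. vL < H i} \<noteq> {}"
    using grp_nonempty G2 unfolding high[symmetric] by force
  note part1 = B_D_subset_A_D_if_sp_greater[OF this thr[unfolded high]]
    and part2 = B_D_subset_A_D_or_reversal_if_sp_less[OF this thr[unfolded high]]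
  show ?thesis
  proof (intro conjI impI)
    show "\<forall>t\<ge>2. B.D t \<subseteq> A.D t" if "sp' < sp"
      using part1[OF that] by blast
  next
    assume "sp < sp'"
    moreover have "vH' < vH"
      using opp \<open>sp < sp'\<close> by (simp add: mult_less_0_iff)
    ultimately show "(\<forall>t\<ge>2. B.D t \<subseteq> A.D t)
      \<or> (\<exists>tt\<ge>2. (\<forall>t. 2 \<le> t \<and> t \<le> tt \<longrightarrow> B.D t \<subseteq> A.D t) \<and> (\<forall>t>tt. A.D t \<subseteq> B.D t))"
      using part2 by fast
  qed
qed

end
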